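(* Let $n\ge4$ be even. For each $1\le i\le n-1$, $Y_i=\{z\in\mathcal F_n: z(1)=i+1\}$. Consequently $\mathcal F_n=Y_1\sqcup Y_2\sqcup\cdots\sqcup Y_{n-1}$.
   Context: $\mathcal F_m$ is the set of fixed-point-free involutions in $S_m$; $s_i=(i,i+1)$; permutations compose right to left and $z(i)$ is the image of $i$. Regard $\mathcal F_{n-2}\subset S_n$ (fixing $n-1,n$). With $w_0$ the longest element of $S_n$, $\rho(z)=w_0zs_{n-1}w_0$ for $z\in\mathcal F_{n-2}$, $Y_1=\rho(\mathcal F_{n-2})$, $\sigma_i=s_is_{i-1}\cdots s_1$, and $Y_i=\sigma_iY_1\sigma_i^{-1}$. *)

theory Defs
  imports "HOL-Combinatorics.Combinatorics"
begin

text \<open>Permutations of S_n are functions nat => nat permuting {1..n}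
  (identity outside); composition is right-to-left (function composition).\<close>

definition fpf_inv :: "nat \<Rightarrow> (nat \<Rightarrow> nat) set" where
  "fpf_inv m = {z. z permutes {1..m} \<and> z \<circ> z = id \<and> (\<forall>i\<in>{1..m}. z i \<noteq> i)}"

definition s_tr :: "nat \<Rightarrow> nat \<Rightarrow> nat" where
  "s_tr i = transpose i (i + 1)"

definition w0 :: "nat \<Rightarrow> nat \<Rightarrow> nat" where
  "w0 n = (\<lambda>j. if 1 \<le> j \<and> j \<le> n then n + 1 - j else j)"

definition rho :: "nat \<Rightarrow> (nat \<Rightarrow> nat) \<Rightarrow> (nat \<Rightarrow> nat)" where
  "rho n z = w0 n \<circ> z \<circ> s_tr (n - 1) \<circ> w0 n"

fun sigma :: "nat \<Rightarrow> nat \<Rightarrow> nat" where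
  "sigma 0 = id"
| "sigma (Suc i) = s_tr (Suc i) \<circ> sigma i"

definition Y :: "nat \<Rightarrow> nat \<Rightarrow> (nat \<Rightarrow> nat) set" where
  "Y n i = (\<lambda>y. sigma i \<circ> y \<circ> inv (sigma i)) ` (rho n ` fpf_inv (n - 2))"

end

theory Submission
  imports Defs
begin

text \<open>Conjugation by a permutation \<open>p\<close> of \<open>{1..n}\<close> maps the fixed-point-free
  involutions \<open>y\<close> with \<open>y a = b\<close> onto those \<open>z\<close> with \<open>z (p a) = p b\<close>.
  Right multiplication by \<open>s\<^sub>n\<^sub>-\<^sub>1\<close> identifies \<open>\<F>\<^sub>n\<^sub>-\<^sub>2\<close> with the \<open>z \<in> \<F>\<^sub>n\<close> having
  \<open>z n = n - 1\<close>, because the transposition commutes with every permutation that fixes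
  or swaps \<open>n - 1\<close> and \<open>n\<close>. Conjugating by \<open>w\<^sub>0\<close> turns this condition into \<open>z 1 = 2\<close>,
  and conjugating further by \<open>\<sigma>\<^sub>i\<close>, which sends \<open>1 \<mapsto> i + 1\<close> and \<open>2 \<mapsto> 1\<close>, into
  \<open>z (i + 1) = 1\<close>, i.e. \<open>z 1 = i + 1\<close>. The partition just sorts \<open>z\<close> by \<open>z 1 \<in> {2..n}\<close>.\<close>

lemma comp_transpose_commute:
  assumes "inj f" and "f ` {a, b} = {a, b}"
  shows "f \<circ> transpose a b = transpose a b \<circ> f"
proof
  fix c
  have "f c \<in> {a, b} \<longleftrightarrow> c \<in> {a, b}"
    using assms by (metis inj_image_mem_iff)
  then show "(f \<circ> transpose a b) c = (transpose a b \<circ> f) c"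
    using assms(2) by (auto simp: transpose_def doubleton_eq_iff)
qed

lemma fpf_inv_apply_eq_commute:
  assumes "z \<in> fpf_inv n"
  shows "z a = b \<longleftrightarrow> z b = a"
  using assms unfolding fpf_inv_def by (auto simp: pointfree_idE)

lemma fpf_inv_conj:
  assumes p: "p permutes {1..n}" and y: "y \<in> fpf_inv n"
  shows "p \<circ> y \<circ> inv p \<in> fpf_inv n"
proof -
  have yp: "y permutes {1..n}" and yy: "y \<circ> y = id" and yf: "\<forall>i\<in>{1..n}. y i \<noteq> i"
    using y unfolding fpf_inv_def by auto
  have "p \<circ> y \<circ> inv p permutes {1..n}"
    by (intro permutes_compose permutes_inv p yp)
  moreover have "(p \<circ> y \<circ> inv p) \<circ> (p \<circ> y \<circ> inv p) = id"
    using permutes_inverses[OF p] yy by (simp add: fun_eq_iff)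
  moreover have "(p \<circ> y \<circ> inv p) i \<noteq> i" if "i \<in> {1..n}" for i
  proof -
    have "y (inv p i) \<noteq> inv p i"
      using yf that permutes_in_image[OF permutes_inv[OF p]] by blast
    then show ?thesis
      using permutes_inverses[OF p] by (metis comp_apply)
  qed
  ultimately show ?thesis unfolding fpf_inv_def by blast
qed

lemma fpf_inv_conj_image:
  assumes p: "p permutes {1..n}"
  shows "(\<lambda>y. p \<circ> y \<circ> inv p) ` {y \<in> fpf_inv n. y a = b} = {z \<in> fpf_inv n. z (p a) = p b}"
proof (intro equalityI subsetI)
  fix z assume "z \<in> (\<lambda>y. p \<circ> y \<circ> inv p) ` {y \<in> fpf_inv n. y a = b}"
  then obtain y where "y \<in> fpf_inv n" "y a = b" and z: "z = p \<circ> y \<circ> inv p"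
    by blast
  then show "z \<in> {z \<in> fpf_inv n. z (p a) = p b}"
    using fpf_inv_conj[OF p] permutes_inverses(2)[OF p] by simp
next
  fix z assume z: "z \<in> {z \<in> fpf_inv n. z (p a) = p b}"
  define y where "y = inv p \<circ> z \<circ> inv (inv p)"
  have "y \<in> fpf_inv n"
    using z fpf_inv_conj[OF permutes_inv[OF p]] unfolding y_def by blast
  moreover have "y a = b" and "z = p \<circ> y \<circ> inv p"
    using z permutes_inverses[OF p] inv_inv_eq[OF permutes_bij[OF p]]
    by (simp_all add: y_def fun_eq_iff)
  ultimately show "z \<in> (\<lambda>y. p \<circ> y \<circ> inv p) ` {y \<in> fpf_inv n. y a = b}"
    by blast
qed

lemma sigma_permutes: "sigma i permutes {1..Suc i}"
proof (induction i)
  case 0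
  show ?case by (simp add: permutes_id flip: id_def)
next
  case (Suc i)
  have "sigma i permutes {1..Suc (Suc i)}"
    using Suc.IH by (rule permutes_subset) auto
  moreover have "s_tr (Suc i) permutes {1..Suc (Suc i)}"
    unfolding s_tr_def by (rule permutes_swap_id) auto
  ultimately show ?case
    using permutes_compose by (simp only: sigma.simps)
qed

lemma sigma_apply_1: "sigma i 1 = Suc i"
  by (induction i) (simp_all add: s_tr_def)

lemma sigma_apply_2: "1 \<le> i \<Longrightarrow> sigma i 2 = 1"
proof (induction i)
  case (Suc i)
  then show ?case by (cases i) (simp_all add: s_tr_def transpose_def)
qed simp

lemma w0_involution: "w0 n \<circ> w0 n = id"
  unfolding w0_def by (auto simp: fun_eq_iff)

lemma inv_w0: "inv (w0 n) = w0 n"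
  by (rule inv_unique_comp) (rule w0_involution)+

lemma w0_permutes: "w0 n permutes {1..n}"
proof (rule bij_imp_permutes)
  show "bij_betw (w0 n) {1..n} {1..n}"
    by (rule bij_betw_byWitness[where f' = "w0 n"])
      (auto simp: w0_def)
qed (auto simp: w0_def)

lemma fpf_inv_comp_transpose:
  assumes z: "z \<in> fpf_inv m"
  shows "z \<circ> transpose (m + 1) (m + 2) \<in> fpf_inv (m + 2)" (is "z \<circ> ?t \<in> _")
    and "(z \<circ> transpose (m + 1) (m + 2)) (m + 2) = m + 1"
proof -
  have zp: "z permutes {1..m}" and zz: "z \<circ> z = id" and zf: "\<forall>i\<in>{1..m}. z i \<noteq> i"
    using z unfolding fpf_inv_def by auto
  have fix_ab: "z (m + 1) = m + 1" "z (m + 2) = m + 2"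
    using zp by (auto intro: permutes_not_in)
  then have commute: "z \<circ> ?t = ?t \<circ> z"
    using permutes_inj[OF zp] by (intro comp_transpose_commute) auto
  have "z \<circ> ?t permutes {1..m + 2}"
    by (intro permutes_compose permutes_swap_id permutes_subset[OF zp]) auto
  moreover have "(z \<circ> ?t) \<circ> (z \<circ> ?t) = id"
    by (metis comp_assoc commute zz transpose_comp_involutory comp_id)
  moreover have "(z \<circ> ?t) i \<noteq> i" if "i \<in> {1..m + 2}" for i
    using that zf fix_ab by (auto simp: le_Suc_eq)
  ultimately show "z \<circ> ?t \<in> fpf_inv (m + 2)"
    unfolding fpf_inv_def by blast
  show "(z \<circ> ?t) (m + 2) = m + 1"
    using fix_ab by simp
qed

lemma fpf_inv_comp_transpose_restrict:
  assumes x: "x \<in> fpf_inv (m + 2)" and swap: "x (m + 2) = m + 1"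
  shows "x \<circ> transpose (m + 1) (m + 2) \<in> fpf_inv m" (is "x \<circ> ?t \<in> _")
proof -
  have xp: "x permutes {1..m + 2}" and xx: "x \<circ> x = id" and xf: "\<forall>i\<in>{1..m + 2}. x i \<noteq> i"
    using x unfolding fpf_inv_def by auto
  have swap': "x (m + 1) = m + 2"
    using swap fpf_inv_apply_eq_commute[OF x] by blast
  have commute: "x \<circ> ?t = ?t \<circ> x"
    using permutes_inj[OF xp] swap swap' by (intro comp_transpose_commute) auto
  have "x \<circ> ?t permutes {1..m}"
  proof (rule permutes_superset)
    show "x \<circ> ?t permutes {1..m + 2}"
      by (intro permutes_compose permutes_swap_id xp) auto
    show "(x \<circ> ?t) i = i" if "i \<in> {1..m + 2} - {1..m}" for i
      using that swap swap' by (auto simp: le_Suc_eq)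
  qed
  moreover have "(x \<circ> ?t) \<circ> (x \<circ> ?t) = id"
    by (metis comp_assoc commute xx transpose_comp_involutory comp_id)
  moreover have "\<forall>i\<in>{1..m}. (x \<circ> ?t) i \<noteq> i"
    using xf by auto
  ultimately show ?thesis
    unfolding fpf_inv_def by blast
qed

lemma fpf_inv_comp_transpose_image:
  "(\<lambda>z. z \<circ> transpose (m + 1) (m + 2)) ` fpf_inv m = {x \<in> fpf_inv (m + 2). x (m + 2) = m + 1}"
proof (intro equalityI subsetI)
  fix x assume "x \<in> (\<lambda>z. z \<circ> transpose (m + 1) (m + 2)) ` fpf_inv m"
  then show "x \<in> {x \<in> fpf_inv (m + 2). x (m + 2) = m + 1}"
    using fpf_inv_comp_transpose by auto
next
  fix x assume "x \<in> {x \<in> fpf_inv (m + 2). x (m + 2) = m + 1}"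
  then have "x \<circ> transpose (m + 1) (m + 2) \<in> fpf_inv m"
    and "x = (x \<circ> transpose (m + 1) (m + 2)) \<circ> transpose (m + 1) (m + 2)"
    using fpf_inv_comp_transpose_restrict by (auto simp: comp_assoc)
  then show "x \<in> (\<lambda>z. z \<circ> transpose (m + 1) (m + 2)) ` fpf_inv m"
    by blast
qed

lemma rho_image_fpf_inv:
  assumes "2 \<le> n"
  shows "rho n ` fpf_inv (n - 2) = {z \<in> fpf_inv n. z 1 = 2}"
proof -
  obtain m where n: "n = m + 2"
    using assms by (metis add.commute le_add_diff_inverse)
  have "rho n z = w0 n \<circ> (z \<circ> transpose (m + 1) (m + 2)) \<circ> inv (w0 n)" for z
    by (simp add: rho_def inv_w0 s_tr_def n comp_assoc)
  then have "rho n ` fpf_inv (n - 2)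
      = (\<lambda>y. w0 n \<circ> y \<circ> inv (w0 n)) ` ((\<lambda>z. z \<circ> transpose (m + 1) (m + 2)) ` fpf_inv m)"
    by (simp add: image_image n)
  also have "\<dots> = (\<lambda>y. w0 n \<circ> y \<circ> inv (w0 n)) ` {x \<in> fpf_inv n. x n = n - 1}"
    unfolding fpf_inv_comp_transpose_image n by simp
  also have "\<dots> = {z \<in> fpf_inv n. z (w0 n n) = w0 n (n - 1)}"
    by (rule fpf_inv_conj_image[OF w0_permutes])
  also have "w0 n n = 1"
    using assms by (simp add: w0_def)
  also have "w0 n (n - 1) = 2"
    using assms by (simp add: w0_def)
  finally show ?thesis .
qed

lemma Y_eq:
  assumes "1 \<le> i" "i < n"
  shows "Y n i = {z \<in> fpf_inv n. z 1 = i + 1}"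
proof -
  have "2 \<le> n"
    using assms by simp
  have "sigma i permutes {1..n}"
    using assms permutes_subset[OF sigma_permutes] by auto
  then have "Y n i = {z \<in> fpf_inv n. z (sigma i 1) = sigma i 2}"
    unfolding Y_def rho_image_fpf_inv[OF \<open>2 \<le> n\<close>] by (rule fpf_inv_conj_image)
  also have "\<dots> = {z \<in> fpf_inv n. z 1 = i + 1}"
    unfolding sigma_apply_1 sigma_apply_2[OF \<open>1 \<le> i\<close>]
    using fpf_inv_apply_eq_commute[of _ n "Suc i" 1] by auto
  finally show ?thesis .
qed

theorem theorem3p3:
  fixes n :: nat
  assumes "even n" and "n \<ge> 4"
  shows "(\<forall>i\<in>{1..n-1}. Y n i = {z \<in> fpf_inv n. z 1 = i + 1})
       \<and> fpf_inv n = (\<Union>i\<in>{1..n-1}. Y n i)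
       \<and> disjoint_family_on (Y n) {1..n-1}"
proof (intro conjI)
  show Y: "\<forall>i\<in>{1..n-1}. Y n i = {z \<in> fpf_inv n. z 1 = i + 1}"
    using Y_eq by auto
  have "z 1 - 1 \<in> {1..n-1} \<and> z 1 = (z 1 - 1) + 1" if "z \<in> fpf_inv n" for z
  proof -
    have "z 1 \<in> {1..n}" "z 1 \<noteq> 1"
      using that \<open>n \<ge> 4\<close> permutes_in_image unfolding fpf_inv_def by fastforce+
    then show ?thesis by auto
  qed
  then show "fpf_inv n = (\<Union>i\<in>{1..n-1}. Y n i)"
    using Y by blast
  show "disjoint_family_on (Y n) {1..n-1}"
    unfolding disjoint_family_on_def using Y by auto
qed

end
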